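(* Let $N\cong\mathbb{Z}^n$ be a lattice and let $\Sigma$ be a complete fan in $N_{\mathbb{Q}}$. Assume there exist rays $\rho_1,\ldots,\rho_n\in\Sigma(1)$ such that their primitive generators $B=\{p_1,\ldots,p_n\}$ form a basis of the lattice $N$ and the primitive generators of all remaining rays in $\Sigma(1)$ are contained in the negative octant of $B$. Then $\rho_1,\ldots,\rho_n$ are the extremal rays of a maximal cone $\sigma\in\Sigma$ (i.e. $\operatorname{Cone}(p_1,\ldots,p_n)\in\Sigma$).
   Context: $\Sigma(1)$ is the set of rays of $\Sigma$; $p_i$ denotes the primitive lattice vector on $\rho_i$. For a finite set $S=\{s_1,\ldots,s_k\}\subset N_{\mathbb{Q}}$, its negative octant is $\{\sum_i a_i s_i:\ a_i\in\mathbb{Q},\ a_i\le 0\}$. *)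

theory Defs
  imports "HOL-Analysis.Analysis"
begin

text \<open>We take N = Z^n inside N_Q = Q^n, modelled as rat ^ 'n (n = CARD('n)).\<close>

definition lattice :: "(rat ^ 'n) set" where
  "lattice = {v. \<forall>i. v $ i \<in> \<int>}"

definition qdot :: "rat ^ 'n \<Rightarrow> rat ^ 'n \<Rightarrow> rat" where
  "qdot u v = (\<Sum>i\<in>UNIV. u $ i * v $ i)"

definition cone_gen :: "(rat ^ 'n) set \<Rightarrow> (rat ^ 'n) set" where
  "cone_gen S = {\<Sum>s\<in>S. a s *s s | a. \<forall>s\<in>S. a s \<ge> 0}"

definition neg_octant :: "(rat ^ 'n) set \<Rightarrow> (rat ^ 'n) set" where
  "neg_octant S = {\<Sum>s\<in>S. a s *s s | a. \<forall>s\<in>S. a s \<le> 0}"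

definition polyhedral_cone :: "(rat ^ 'n) set \<Rightarrow> bool" where
  "polyhedral_cone \<sigma> \<longleftrightarrow> (\<exists>S. finite S \<and> \<sigma> = cone_gen S)"

definition strongly_convex :: "(rat ^ 'n) set \<Rightarrow> bool" where
  "strongly_convex \<sigma> \<longleftrightarrow> \<sigma> \<inter> uminus ` \<sigma> = {0}"

definition dual_cone :: "(rat ^ 'n) set \<Rightarrow> (rat ^ 'n) set" where
  "dual_cone \<sigma> = {u. \<forall>v\<in>\<sigma>. qdot u v \<ge> 0}"

definition face_of_cone :: "(rat ^ 'n) set \<Rightarrow> (rat ^ 'n) set \<Rightarrow> bool" where
  "face_of_cone \<tau> \<sigma> \<longleftrightarrow> (\<exists>u\<in>dual_cone \<sigma>. \<tau> = {v\<in>\<sigma>. qdot u v = 0})"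

definition is_fan :: "(rat ^ 'n) set set \<Rightarrow> bool" where
  "is_fan \<Sigma> \<longleftrightarrow> finite \<Sigma>
     \<and> (\<forall>\<sigma>\<in>\<Sigma>. polyhedral_cone \<sigma> \<and> strongly_convex \<sigma>)
     \<and> (\<forall>\<sigma>\<in>\<Sigma>. \<forall>\<tau>. face_of_cone \<tau> \<sigma> \<longrightarrow> \<tau> \<in> \<Sigma>)
     \<and> (\<forall>\<sigma>\<in>\<Sigma>. \<forall>\<tau>\<in>\<Sigma>. face_of_cone (\<sigma> \<inter> \<tau>) \<sigma> \<and> face_of_cone (\<sigma> \<inter> \<tau>) \<tau>)"

definition complete_fan :: "(rat ^ 'n) set set \<Rightarrow> bool" where
  "complete_fan \<Sigma> \<longleftrightarrow> is_fan \<Sigma> \<and> \<Union>\<Sigma> = UNIV"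

definition is_ray :: "(rat ^ 'n) set \<Rightarrow> bool" where
  "is_ray \<rho> \<longleftrightarrow> (\<exists>v. v \<noteq> 0 \<and> \<rho> = {c *s v | c. c \<ge> 0})"

definition rays :: "(rat ^ 'n) set set \<Rightarrow> (rat ^ 'n) set set" where
  "rays \<Sigma> = {\<rho>\<in>\<Sigma>. is_ray \<rho>}"

definition primitive_gen :: "(rat ^ 'n) set \<Rightarrow> rat ^ 'n \<Rightarrow> bool" where
  "primitive_gen \<rho> p \<longleftrightarrow> p \<in> \<rho> \<inter> lattice \<and> p \<noteq> 0
     \<and> (\<forall>q\<in>\<rho> \<inter> lattice. \<exists>k::nat. q = of_nat k *s p)"

definition lattice_basis :: "('n \<Rightarrow> rat ^ 'n) \<Rightarrow> bool" where
  "lattice_basis p \<longleftrightarrow> (\<forall>i. p i \<in> lattice)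
     \<and> (\<forall>c::'n \<Rightarrow> int. (\<Sum>i\<in>UNIV. of_int (c i) *s p i) = 0 \<longrightarrow> (\<forall>i. c i = 0))
     \<and> (\<forall>x\<in>lattice. \<exists>c::'n \<Rightarrow> int. x = (\<Sum>i\<in>UNIV. of_int (c i) *s p i))"

end

(*
  The vector x = p_1 + ... + p_n lies in some cone sigma = cone(S) of the complete fan, where S
  may be taken irredundant. By Farkas' lemma every generator s in S spans a face of sigma, hence a
  ray of the fan, so s is either a positive multiple of some p_i or lies in the negative octant
  of B. For each i, the cone of vectors whose i-th coordinate with respect to B is nonpositive
  does not contain x, so some generator is a positive multiple of p_i; hence cone(B) is contained
  in sigma. A generator s in the negative octant would then satisfy -s in cone(B), i.e. s and -s
  both in sigma, which strong convexity forbids. So S lies in cone(B) and sigma = cone(B).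
*)
theory Submission
  imports Defs
begin

lemma qdot_diff_left: "qdot (u - w) x = qdot u x - qdot w x"
  unfolding qdot_def by (simp add: sum_subtractf algebra_simps)

lemma qdot_scale_left: "qdot (c *s u) x = c * qdot u x"
  unfolding qdot_def by (simp add: sum_distrib_left algebra_simps)

lemma qdot_sum_left: "qdot (\<Sum>i\<in>I. f i) x = (\<Sum>i\<in>I. qdot (f i) x)"
  unfolding qdot_def by (simp add: sum_distrib_right sum.swap[of _ I])

lemma qdot_diff_right: "qdot u (x - y) = qdot u x - qdot u y"
  unfolding qdot_def by (simp add: sum_subtractf algebra_simps)

lemma qdot_neg_right: "qdot u (- x) = - qdot u x"
  unfolding qdot_def by (simp add: sum_negf)

lemma qdot_scale_right: "qdot u (c *s x) = c * qdot u x"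
  unfolding qdot_def by (simp add: sum_distrib_left algebra_simps)

lemma qdot_sum_right: "qdot u (\<Sum>i\<in>I. f i) = (\<Sum>i\<in>I. qdot u (f i))"
  unfolding qdot_def by (simp add: sum_distrib_left sum.swap[of _ I])

lemma qdot_comb_right: "qdot u (\<Sum>i\<in>I. l i *s g i) = (\<Sum>i\<in>I. l i * qdot u (g i))"
  by (simp add: qdot_sum_right qdot_scale_right)

lemma qdot_neg_self_less: "b \<noteq> 0 \<Longrightarrow> qdot (- b) b < 0"
proof -
  assume "b \<noteq> 0"
  then obtain i where "b $ i \<noteq> 0" by (auto simp: vec_eq_iff)
  then have "0 < (\<Sum>j\<in>UNIV. b $ j * b $ j)"
    by (intro sum_pos2[of UNIV i]) (auto simp: zero_less_mult_iff linorder_neq_iff)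
  then show ?thesis unfolding qdot_def by (simp add: sum_negf)
qed

lemma smult_sum: "(c::rat) *s (\<Sum>i\<in>A. f i) = (\<Sum>i\<in>A. c *s f i)"
  by (simp add: vec_eq_iff sum_distrib_left)

lemma sum_delta_smult:
  fixes p :: "'i::finite \<Rightarrow> rat^'n"
  shows "(\<Sum>j\<in>UNIV. (if j = i then c else 0) *s p j) = c *s p i"
  by (simp add: if_distrib[of "\<lambda>a. a *s _"] cong: if_cong)

definition is_convex_cone :: "(rat ^ 'n) set \<Rightarrow> bool" where
  "is_convex_cone K \<longleftrightarrow> 0 \<in> K \<and> (\<forall>x\<in>K. \<forall>y\<in>K. x + y \<in> K) \<and> (\<forall>c\<ge>0. \<forall>x\<in>K. c *s x \<in> K)"

lemma convex_cone_sum: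
  assumes "is_convex_cone K" "\<And>i. i \<in> I \<Longrightarrow> f i \<in> K"
  shows "(\<Sum>i\<in>I. f i) \<in> K"
  using assms(2)
  by (induction I rule: infinite_finite_induct) (use assms(1) in \<open>auto simp: is_convex_cone_def\<close>)

lemma cone_gen_least:
  assumes "is_convex_cone K" "S \<subseteq> K"
  shows "cone_gen S \<subseteq> K"
  using assms unfolding cone_gen_def is_convex_cone_def
  by (auto intro!: convex_cone_sum[OF assms(1)])

lemma is_convex_cone_cone_gen: "is_convex_cone (cone_gen S)"
  unfolding is_convex_cone_def
proof (intro conjI ballI allI impI)
  show "0 \<in> cone_gen S"
    unfolding cone_gen_def by (intro CollectI exI[of _ "\<lambda>_. 0"]) simp
  fix x y assume "x \<in> cone_gen S" "y \<in> cone_gen S"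
  then obtain a b where "\<forall>s\<in>S. 0 \<le> a s" "x = (\<Sum>s\<in>S. a s *s s)"
    and "\<forall>s\<in>S. 0 \<le> b s" "y = (\<Sum>s\<in>S. b s *s s)"
    unfolding cone_gen_def by blast
  then show "x + y \<in> cone_gen S"
    unfolding cone_gen_def
    by (intro CollectI exI[of _ "\<lambda>s. a s + b s"]) (simp add: vector_sadd_rdistrib sum.distrib)
next
  fix c :: rat and x assume "0 \<le> c" "x \<in> cone_gen S"
  then obtain a where "\<forall>s\<in>S. 0 \<le> a s" "x = (\<Sum>s\<in>S. a s *s s)"
    unfolding cone_gen_def by blast
  with \<open>0 \<le> c\<close> show "c *s x \<in> cone_gen S"
    unfolding cone_gen_def
    by (intro CollectI exI[of _ "\<lambda>s. c * a s"]) (simp add: smult_sum vector_smult_assoc)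
qed

lemma cone_gen_zero: "0 \<in> cone_gen S"
  using is_convex_cone_cone_gen unfolding is_convex_cone_def by blast

lemma cone_gen_add: "x \<in> cone_gen S \<Longrightarrow> y \<in> cone_gen S \<Longrightarrow> x + y \<in> cone_gen S"
  using is_convex_cone_cone_gen unfolding is_convex_cone_def by blast

lemma cone_gen_scale: "x \<in> cone_gen S \<Longrightarrow> 0 \<le> c \<Longrightarrow> c *s x \<in> cone_gen S"
  using is_convex_cone_cone_gen unfolding is_convex_cone_def by blast

lemma cone_gen_mem:
  assumes "finite S" "s \<in> S"
  shows "s \<in> cone_gen S"
proof -
  have "(\<Sum>t\<in>S. (if t = s then 1 else 0) *s t) = s"
    using assms by (simp add: if_distrib[of "\<lambda>a. a *s _"] cong: if_cong)
  then show ?thesis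
    unfolding cone_gen_def by (intro CollectI exI[of _ "\<lambda>t. if t = s then 1 else 0"]) auto
qed

lemma cone_gen_mono:
  assumes "finite T" "S \<subseteq> T"
  shows "cone_gen S \<subseteq> cone_gen T"
  using assms by (intro cone_gen_least is_convex_cone_cone_gen) (auto intro: cone_gen_mem)

lemma cone_gen_insert:
  assumes "finite S"
  shows "cone_gen (insert a S) = {c *s a + v | c v. 0 \<le> c \<and> v \<in> cone_gen S}"
    (is "_ = ?K")
proof
  have "is_convex_cone ?K"
    unfolding is_convex_cone_def
  proof (intro conjI ballI allI impI)
    show "0 \<in> ?K" using cone_gen_zero by force
    fix x y assume "x \<in> ?K" "y \<in> ?K"
    then obtain c d v w where "x = c *s a + v" "y = d *s a + w"
      and "0 \<le> c" "0 \<le> d" "v \<in> cone_gen S" "w \<in> cone_gen S" by blast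
    then show "x + y \<in> ?K"
      by (intro CollectI exI[of _ "c + d"] exI[of _ "v + w"])
         (auto simp: vector_sadd_rdistrib cone_gen_add)
  next
    fix e :: rat and x assume "0 \<le> e" "x \<in> ?K"
    then obtain c v where "x = c *s a + v" "0 \<le> c" "v \<in> cone_gen S" by blast
    with \<open>0 \<le> e\<close> show "e *s x \<in> ?K"
      by (intro CollectI exI[of _ "e * c"] exI[of _ "e *s v"])
         (auto simp: vector_add_ldistrib vector_smult_assoc cone_gen_scale)
  qed
  moreover have "insert a S \<subseteq> ?K"
    using cone_gen_zero assms by (force intro: cone_gen_mem exI[of _ 1] exI[of _ 0])
  ultimately show "cone_gen (insert a S) \<subseteq> ?K" by (rule cone_gen_least)
next
  have "a \<in> cone_gen (insert a S)" "cone_gen S \<subseteq> cone_gen (insert a S)"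
    using assms by (simp_all add: cone_gen_mem cone_gen_mono subset_insertI)
  then show "?K \<subseteq> cone_gen (insert a S)"
    by (blast intro: cone_gen_add cone_gen_scale)
qed

lemma neg_octant_eq_uminus_cone_gen: "neg_octant S = uminus ` cone_gen S"
proof -
  have neg_comb: "- (\<Sum>s\<in>S. a s *s s) = (\<Sum>s\<in>S. (- a s) *s s)" for a
    by (simp add: vec_eq_iff sum_negf)
  show ?thesis
  proof
    show "neg_octant S \<subseteq> uminus ` cone_gen S"
    proof
      fix x assume "x \<in> neg_octant S"
      then obtain a where "\<forall>s\<in>S. a s \<le> 0" "x = (\<Sum>s\<in>S. a s *s s)"
        unfolding neg_octant_def by blast
      then have "- x \<in> cone_gen S"
        unfolding cone_gen_def neg_comb by (intro CollectI exI[of _ "\<lambda>s. - a s"]) (auto simp: sum_negf)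
      then show "x \<in> uminus ` cone_gen S" by (force intro: image_eqI[of _ _ "- x"])
    qed
    show "uminus ` cone_gen S \<subseteq> neg_octant S"
    proof
      fix x assume "x \<in> uminus ` cone_gen S"
      then obtain a where "\<forall>s\<in>S. 0 \<le> a s" "x = - (\<Sum>s\<in>S. a s *s s)"
        unfolding cone_gen_def by blast
      then show "x \<in> neg_octant S"
        unfolding neg_octant_def neg_comb by (intro CollectI exI[of _ "\<lambda>s. - a s"]) (auto simp: sum_negf)
    qed
  qed
qed

definition irredundant :: "(rat ^ 'n) set \<Rightarrow> bool" where
  "irredundant S \<longleftrightarrow> (\<forall>s\<in>S. s \<notin> cone_gen (S - {s}))"

lemma irredundant_nonzero: "irredundant S \<Longrightarrow> s \<in> S \<Longrightarrow> s \<noteq> 0"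
  unfolding irredundant_def using cone_gen_zero by blast

lemma exists_irredundant:
  assumes "finite S"
  obtains T where "T \<subseteq> S" "cone_gen T = cone_gen S" "irredundant T"
  using assms
proof (induction "card S" arbitrary: S rule: less_induct)
  case less
  show ?case
  proof (cases "irredundant S")
    case True
    then show ?thesis using less.prems(1) by blast
  next
    case False
    then obtain s where s: "s \<in> S" "s \<in> cone_gen (S - {s})"
      unfolding irredundant_def by blast
    have "cone_gen S \<subseteq> cone_gen (S - {s})"
      using s less.prems(2) by (intro cone_gen_least is_convex_cone_cone_gen) (auto intro: cone_gen_mem)
    moreover have "cone_gen (S - {s}) \<subseteq> cone_gen S"
      using less.prems(2) by (intro cone_gen_mono) auto
    moreover have "card (S - {s}) < card S"
      using s(1) less.prems(2) by (metis card_Diff1_less)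
    ultimately show ?thesis
      using less.hyps[of "S - {s}"] less.prems by (metis Diff_subset finite_Diff subset_trans subset_antisym)
  qed
qed

section \<open>Farkas' lemma\<close>

definition proj_along :: "rat ^ 'n \<Rightarrow> rat ^ 'n \<Rightarrow> rat ^ 'n \<Rightarrow> rat ^ 'n" where
  "proj_along u a x = x - (qdot u x / qdot u a) *s a"

lemma qdot_proj_along:
  assumes "qdot u a \<noteq> 0"
  shows "qdot w (proj_along u a x) = qdot (w - (qdot w a / qdot u a) *s u) x"
  using assms unfolding proj_along_def
  by (simp add: qdot_diff_left qdot_diff_right qdot_scale_left qdot_scale_right field_simps)

lemma proj_along_diff: "proj_along u a (x - y) = proj_along u a x - proj_along u a y"
  unfolding proj_along_def by (simp add: vec_eq_iff qdot_diff_right diff_divide_distrib algebra_simps)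

lemma proj_along_comb:
  "proj_along u a (\<Sum>i\<in>I. l i *s g i) = (\<Sum>i\<in>I. l i *s proj_along u a (g i))"
  unfolding proj_along_def
  by (simp add: vec_eq_iff qdot_comb_right sum_subtractf sum_distrib_left sum_distrib_right
      sum_divide_distrib algebra_simps)

lemma proj_along_comb_lift:
  assumes ua: "qdot u a < 0" and ub: "qdot u b < 0"
    and l: "\<forall>i\<in>I. 0 \<le> l i" and ug: "\<forall>i\<in>I. 0 \<le> qdot u (g i)"
    and comb: "proj_along u a b = (\<Sum>i\<in>I. l i *s proj_along u a (g i))"
  shows "\<exists>m\<ge>0. b = (\<Sum>i\<in>I. l i *s g i) + m *s a"
proof -
  define d where "d = b - (\<Sum>i\<in>I. l i *s g i)"
  have "proj_along u a d = proj_along u a b - (\<Sum>i\<in>I. l i *s proj_along u a (g i))"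
    unfolding d_def by (simp add: proj_along_diff proj_along_comb)
  then have d_eq: "d = (qdot u d / qdot u a) *s a"
    using comb unfolding proj_along_def by simp
  have "0 \<le> (\<Sum>i\<in>I. l i * qdot u (g i))"
    using l ug by (intro sum_nonneg) auto
  then have "qdot u d < 0"
    using ub unfolding d_def by (simp add: qdot_diff_right qdot_comb_right)
  then have "0 \<le> qdot u d / qdot u a"
    using ua by (simp add: divide_nonpos_neg)
  with d_eq show ?thesis
    unfolding d_def by (metis add.commute diff_add_cancel)
qed

lemma farkas_family:
  fixes g :: "'i \<Rightarrow> rat ^ 'n"
  assumes "finite I" and "\<nexists>l. (\<forall>i\<in>I. 0 \<le> l i) \<and> b = (\<Sum>i\<in>I. l i *s g i)"
  shows "\<exists>u. (\<forall>i\<in>I. 0 \<le> qdot u (g i)) \<and> qdot u b < 0"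
  using assms
proof (induction I arbitrary: g b rule: finite_induct)
  case empty
  then have "b \<noteq> 0" by auto
  then show ?case using qdot_neg_self_less by blast
next
  case (insert j I)
  have comb_insert: "(\<Sum>i\<in>insert j I. (l(j := m)) i *s g i) = (\<Sum>i\<in>I. l i *s g i) + m *s g j"
    for l m
  proof -
    have "(\<Sum>i\<in>I. (l(j := m)) i *s g i) = (\<Sum>i\<in>I. l i *s g i)"
      using insert.hyps(2) by (intro sum.cong) auto
    then show ?thesis using insert.hyps by (simp add: add.commute)
  qed
  have "\<nexists>l. (\<forall>i\<in>I. 0 \<le> l i) \<and> b = (\<Sum>i\<in>I. l i *s g i)"
  proof
    assume "\<exists>l. (\<forall>i\<in>I. 0 \<le> l i) \<and> b = (\<Sum>i\<in>I. l i *s g i)"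
    then obtain l where "\<forall>i\<in>I. 0 \<le> l i" "b = (\<Sum>i\<in>I. l i *s g i)" by blast
    with comb_insert[of l 0]
    have "(\<forall>i\<in>insert j I. 0 \<le> (l(j := 0)) i) \<and> b = (\<Sum>i\<in>insert j I. (l(j := 0)) i *s g i)"
      by simp
    with insert.prems show False by blast
  qed
  then obtain u where u: "\<forall>i\<in>I. 0 \<le> qdot u (g i)" "qdot u b < 0"
    using insert.IH by blast
  show ?case
  proof (cases "0 \<le> qdot u (g j)")
    case True
    with u show ?thesis by auto
  next
    case False
    \<comment> \<open>Fourier--Motzkin: eliminate \<open>g j\<close> by projecting along it onto the kernel of \<open>u\<close>.\<close>
    then have ua: "qdot u (g j) < 0" by simp
    let ?P = "proj_along u (g j)"
    have "\<nexists>l. (\<forall>i\<in>I. 0 \<le> l i) \<and> ?P b = (\<Sum>i\<in>I. l i *s ?P (g i))"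
    proof
      assume "\<exists>l. (\<forall>i\<in>I. 0 \<le> l i) \<and> ?P b = (\<Sum>i\<in>I. l i *s ?P (g i))"
      then obtain l m where "\<forall>i\<in>I. 0 \<le> l i" "0 \<le> m" "b = (\<Sum>i\<in>I. l i *s g i) + m *s g j"
        using proj_along_comb_lift[OF ua u(2) _ u(1)] by blast
      with comb_insert[of l m]
      have "(\<forall>i\<in>insert j I. 0 \<le> (l(j := m)) i) \<and> b = (\<Sum>i\<in>insert j I. (l(j := m)) i *s g i)"
        by simp
      with insert.prems show False by blast
    qed
    then obtain w where w: "\<forall>i\<in>I. 0 \<le> qdot w (?P (g i))" "qdot w (?P b) < 0"
      using insert.IH[of "?P b" "?P \<circ> g"] by auto
    have "?P (g j) = 0"
      using ua unfolding proj_along_def by simp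
    then have "0 \<le> qdot w (?P (g j))"
      by (simp add: qdot_def)
    with w show ?thesis
      using ua by (auto simp: qdot_proj_along)
  qed
qed

lemma farkas:
  assumes "finite T" "b \<notin> cone_gen T"
  shows "\<exists>u. (\<forall>t\<in>T. 0 \<le> qdot u t) \<and> qdot u b < 0"
proof -
  have "\<nexists>l. (\<forall>t\<in>T. 0 \<le> l t) \<and> b = (\<Sum>t\<in>T. l t *s id t)"
    using assms(2) unfolding cone_gen_def by auto
  then show ?thesis using farkas_family[OF assms(1)] by fastforce
qed

section \<open>Irredundant generators span rays of the fan\<close>

abbreviation halfline :: "rat ^ 'n \<Rightarrow> (rat ^ 'n) set" where
  "halfline v \<equiv> {c *s v | c. 0 \<le> c}"

lemma halfline_scale:
  assumes "0 < c"
  shows "halfline (c *s v) = halfline v"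
proof (intro subset_antisym subsetI)
  fix x assume "x \<in> halfline (c *s v)"
  then obtain d where "0 \<le> d" "x = (d * c) *s v" by (auto simp: vector_smult_assoc)
  with assms show "x \<in> halfline v" by (auto intro: mult_nonneg_nonneg)
next
  fix x assume "x \<in> halfline v"
  then obtain d where "0 \<le> d" "x = (d / c) *s (c *s v)" using assms by (auto simp: vector_smult_assoc)
  moreover from \<open>0 \<le> d\<close> assms have "0 \<le> d / c" by simp
  ultimately show "x \<in> halfline (c *s v)" by blast
qed

lemma halfline_nonzero_mem:
  assumes "x \<in> halfline s" "x \<noteq> 0"
  obtains c where "0 < c" "s = c *s x"
proof -
  obtain d where "0 \<le> d" "x = d *s s" using assms(1) by blast
  moreover from this assms(2) have "d \<noteq> 0" by auto
  ultimately show ?thesis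
    using that[of "1 / d"] by (simp add: vector_smult_assoc)
qed

lemma strongly_convex_neg_mem:
  assumes "strongly_convex \<sigma>" "x \<in> \<sigma>" "- x \<in> \<sigma>"
  shows "x = 0"
proof -
  have "x \<in> uminus ` \<sigma>" using assms(3) by (force intro: image_eqI[of _ _ "- x"])
  with assms(1,2) show ?thesis unfolding strongly_convex_def by blast
qed

lemma neg_generator_notin_cone_insert_neg:
  assumes fin: "finite S" and irr: "irredundant S" and sc: "strongly_convex (cone_gen S)"
    and "s \<in> S" "t \<in> S" "t \<noteq> s"
  shows "- t \<notin> cone_gen (insert (- s) S)"
proof
  assume "- t \<in> cone_gen (insert (- s) S)"
  then obtain c v where "0 \<le> c" "v \<in> cone_gen S" "- t = c *s (- s) + v"
    using cone_gen_insert[OF fin] by blast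
  moreover have "S = insert s (S - {s})" using \<open>s \<in> S\<close> by blast
  ultimately obtain d w where "w \<in> cone_gen (S - {s})" "- t = (d - c) *s s + w"
    using cone_gen_insert[of "S - {s}" s] fin
    by (auto simp: vector_sub_rdistrib algebra_simps)
  show False
  proof (cases "0 \<le> d - c")
    case True
    have "s \<in> cone_gen S" "t \<in> cone_gen S" "cone_gen (S - {s}) \<subseteq> cone_gen S"
      using fin \<open>s \<in> S\<close> \<open>t \<in> S\<close> by (simp_all add: cone_gen_mem cone_gen_mono)
    with True \<open>w \<in> cone_gen (S - {s})\<close> have "(d - c) *s s + w \<in> cone_gen S"
      by (blast intro: cone_gen_add cone_gen_scale)
    with \<open>- t = (d - c) *s s + w\<close> have "- t \<in> cone_gen S" by simp
    with sc \<open>t \<in> cone_gen S\<close> have "t = 0" by (rule strongly_convex_neg_mem)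
    with irr \<open>t \<in> S\<close> show False by (blast dest: irredundant_nonzero)
  next
    case False
    have "t \<in> cone_gen (S - {s})" using fin \<open>t \<in> S\<close> \<open>t \<noteq> s\<close> by (auto intro: cone_gen_mem)
    with \<open>w \<in> cone_gen (S - {s})\<close> have "(1 / (c - d)) *s (t + w) \<in> cone_gen (S - {s})"
      using False by (auto intro!: cone_gen_scale cone_gen_add)
    moreover have "t + w = (c - d) *s s"
      using \<open>- t = (d - c) *s s + w\<close> by (simp add: vec_eq_iff algebra_simps)
    then have "(1 / (c - d)) *s (t + w) = s"
      using False by (simp add: vector_smult_assoc del: vector_sub_rdistrib)
    ultimately have "s \<in> cone_gen (S - {s})" by simp
    with irr \<open>s \<in> S\<close> show False unfolding irredundant_def by blast
  qed
qed

lemma face_of_cone_halfline_if_supporting: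
  assumes fin: "finite S" and "s \<in> S"
    and u_S: "\<forall>r\<in>S. 0 \<le> qdot u r" and u_s: "qdot u s = 0" and u_pos: "\<forall>t\<in>S - {s}. 0 < qdot u t"
  shows "face_of_cone (halfline s) (cone_gen S)"
  unfolding face_of_cone_def
proof
  show "u \<in> dual_cone (cone_gen S)"
    using u_S unfolding dual_cone_def cone_gen_def
    by (auto simp: qdot_comb_right intro!: sum_nonneg)
  show "halfline s = {v \<in> cone_gen S. qdot u v = 0}"
  proof (intro subset_antisym subsetI)
    fix v assume "v \<in> halfline s"
    with fin \<open>s \<in> S\<close> u_s show "v \<in> {v \<in> cone_gen S. qdot u v = 0}"
      by (auto simp: qdot_scale_right intro: cone_gen_scale cone_gen_mem)
  next
    fix v assume "v \<in> {v \<in> cone_gen S. qdot u v = 0}"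
    then obtain a where a: "\<forall>r\<in>S. 0 \<le> a r" "v = (\<Sum>r\<in>S. a r *s r)" "(\<Sum>r\<in>S. a r * qdot u r) = 0"
      unfolding cone_gen_def by (auto simp: qdot_comb_right)
    then have "\<forall>r\<in>S. a r * qdot u r = 0"
      using fin u_S by (subst (asm) sum_nonneg_eq_0_iff) auto
    then have "\<forall>r\<in>S - {s}. a r = 0"
      using u_pos by (metis DiffD1 less_irrefl mult_eq_0_iff)
    then have "v = a s *s s"
      using a(2) fin \<open>s \<in> S\<close> by (simp add: sum.remove)
    with a(1) \<open>s \<in> S\<close> show "v \<in> halfline s" by auto
  qed
qed

lemma irredundant_halfline_face:
  assumes fin: "finite S" and irr: "irredundant S" and sc: "strongly_convex (cone_gen S)"
    and "s \<in> S"
  shows "face_of_cone (halfline s) (cone_gen S)"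
proof -
  \<comment> \<open>Adjoining \<open>- s\<close> to the generators forces every separating functional to vanish on \<open>s\<close>.\<close>
  have "\<forall>t\<in>S - {s}. \<exists>u. (\<forall>r\<in>insert (- s) S. 0 \<le> qdot u r) \<and> qdot u (- t) < 0"
    using fin neg_generator_notin_cone_insert_neg[OF fin irr sc \<open>s \<in> S\<close>] by (intro ballI farkas) auto
  then obtain U where U: "\<And>t. t \<in> S - {s} \<Longrightarrow>
      (\<forall>r\<in>insert (- s) S. 0 \<le> qdot (U t) r) \<and> 0 < qdot (U t) t"
    by (metis neg_less_0_iff_less qdot_neg_right)
  have "qdot (\<Sum>t\<in>S - {s}. U t) s = 0"
    using U \<open>s \<in> S\<close> by (force simp: qdot_sum_left qdot_neg_right intro: sum.neutral)
  moreover have "\<forall>r\<in>S. 0 \<le> qdot (\<Sum>t\<in>S - {s}. U t) r"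
    using U by (auto simp: qdot_sum_left intro!: sum_nonneg)
  moreover have "\<forall>t\<in>S - {s}. 0 < qdot (\<Sum>t\<in>S - {s}. U t) t"
    using U fin by (auto simp: qdot_sum_left intro!: sum_pos2)
  ultimately show ?thesis
    using fin \<open>s \<in> S\<close> by (intro face_of_cone_halfline_if_supporting) auto
qed

lemma is_fan_strongly_convex: "is_fan \<Sigma> \<Longrightarrow> \<sigma> \<in> \<Sigma> \<Longrightarrow> strongly_convex \<sigma>"
  by (simp add: is_fan_def)

lemma fan_cone_irredundant_generators:
  assumes "is_fan \<Sigma>" "\<sigma> \<in> \<Sigma>"
  obtains S where "finite S" "irredundant S" "\<sigma> = cone_gen S"
proof -
  obtain S0 where "finite S0" "\<sigma> = cone_gen S0"
    using assms unfolding is_fan_def polyhedral_cone_def by blast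
  moreover obtain S where "S \<subseteq> S0" "cone_gen S = cone_gen S0" "irredundant S"
    by (rule exists_irredundant[OF \<open>finite S0\<close>])
  ultimately show ?thesis
    using that finite_subset by metis
qed

lemma irredundant_halfline_in_rays:
  assumes "is_fan \<Sigma>" "cone_gen S \<in> \<Sigma>" "finite S" "irredundant S" "s \<in> S"
  shows "halfline s \<in> rays \<Sigma>"
proof -
  have "strongly_convex (cone_gen S)" using assms(1,2) by (rule is_fan_strongly_convex)
  then have "face_of_cone (halfline s) (cone_gen S)"
    by (rule irredundant_halfline_face[OF assms(3,4) _ assms(5)])
  then have "halfline s \<in> \<Sigma>" using assms(1,2) unfolding is_fan_def by blast
  moreover have "is_ray (halfline s)"
    using irredundant_nonzero[OF assms(4,5)] unfolding is_ray_def by blast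
  ultimately show ?thesis unfolding rays_def by blast
qed

section \<open>Lattice bases and primitive generators\<close>

lemma exists_common_denominator:
  fixes r :: "'i::finite \<Rightarrow> rat"
  obtains D :: rat and W :: "'i \<Rightarrow> int" where "0 < D" "\<And>i. D * r i = of_int (W i)"
proof -
  define den where "den i = snd (quotient_of (r i))" for i
  define D where "D = (\<Prod>i\<in>UNIV. (of_int (den i) :: rat))"
  have den_pos: "0 < den i" for i
    unfolding den_def by (rule quotient_of_denom_pos')
  have "D * r i \<in> \<int>" for i
  proof -
    have "r i = of_int (fst (quotient_of (r i))) / of_int (den i)"
      unfolding den_def by (rule quotient_of_div) simp
    then have "of_int (den i) * r i = of_int (fst (quotient_of (r i)))"
      using den_pos[of i] by (simp add: field_simps)
    then have "D * r i = of_int (fst (quotient_of (r i))) * (\<Prod>j\<in>UNIV - {i}. of_int (den j))"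
      using den_pos[of i] unfolding D_def by (simp add: prod.remove[of UNIV i])
    also have "\<dots> \<in> \<int>" by (intro Ints_mult Ints_prod) auto
    finally show ?thesis .
  qed
  then have "\<forall>i. \<exists>w. D * r i = of_int w" by (metis Ints_cases)
  then obtain W where "\<And>i. D * r i = of_int (W i)" by metis
  moreover have "0 < D"
    unfolding D_def using den_pos by (intro prod_pos) auto
  ultimately show ?thesis using that by blast
qed

lemma lattice_basis_coeffs_unique:
  assumes "lattice_basis p" "(\<Sum>i\<in>UNIV. r i *s p i) = (\<Sum>i\<in>UNIV. r' i *s p i)"
  shows "r = r'"
proof -
  obtain D W where D: "0 < D" "\<And>i. D * (r i - r' i) = of_int (W i)"
    using exists_common_denominator[of "\<lambda>i. r i - r' i"] by metis
  have "(\<Sum>i\<in>UNIV. of_int (W i) *s p i) = D *s ((\<Sum>i\<in>UNIV. r i *s p i) - (\<Sum>i\<in>UNIV. r' i *s p i))"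
    unfolding D(2)[symmetric]
    by (simp add: smult_sum sum_subtractf vector_smult_assoc right_diff_distrib vector_sub_rdistrib)
  then have "\<forall>i. W i = 0"
    using assms unfolding lattice_basis_def by simp
  then show ?thesis
    using D by (simp add: fun_eq_iff)
qed

lemma lattice_basis_inj:
  assumes "lattice_basis p"
  shows "inj p"
proof (rule injI)
  fix i j assume "p i = p j"
  then have "(\<Sum>k\<in>UNIV. (if k = i then 1 else 0) *s p k) = (\<Sum>k\<in>UNIV. (if k = j then 1 else 0) *s p k)"
    by (simp only: sum_delta_smult)
  then have "(\<lambda>k. if k = i then 1 else 0 :: rat) = (\<lambda>k. if k = j then 1 else 0)"
    by (rule lattice_basis_coeffs_unique[OF assms])
  then show "i = j"
    by (simp add: fun_eq_iff) (metis zero_neq_one)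
qed

lemma Ints_if_mult_Ints_Gcd_one:
  fixes Q :: "'i \<Rightarrow> int" and t :: rat
  assumes Q: "Gcd (range Q) = 1" and t: "\<And>i. t * of_int (Q i) \<in> \<int>"
  shows "t \<in> \<int>"
proof -
  obtain a b where ab: "quotient_of t = (a, b)" by (cases "quotient_of t")
  then have "0 < b" "coprime b a" and t_eq: "t = of_int a / of_int b"
    by (simp_all add: quotient_of_denom_pos quotient_of_coprime coprime_commute quotient_of_div)
  have "b dvd Q i" for i
  proof -
    have "(of_int (a * Q i) :: rat) / of_int b \<in> \<int>"
      using t[of i] unfolding t_eq by simp
    then have "b = 0 \<or> b dvd a * Q i"
      by (simp only: of_int_div_of_int_in_Ints_iff)
    with \<open>0 < b\<close> have "b dvd a * Q i" by simp
    with \<open>coprime b a\<close> show ?thesis by (simp add: coprime_dvd_mult_right_iff)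
  qed
  then have "b dvd 1"
    unfolding Q[symmetric] by (intro Gcd_greatest) auto
  with \<open>0 < b\<close> have "b = 1" by simp
  then show ?thesis using t_eq by simp
qed

lemma primitive_gen_halfline_if_Gcd_one:
  fixes Q :: "'n::finite \<Rightarrow> int"
  assumes q: "\<And>i. q $ i = of_int (Q i)" and Q: "Gcd (range Q) = 1"
  shows "primitive_gen (halfline q) q"
  unfolding primitive_gen_def
proof (intro conjI ballI)
  have "q = 1 *s q" by simp
  then have "q \<in> halfline q" using zero_le_one by blast
  moreover have "q \<in> lattice" unfolding lattice_def by (simp add: q)
  ultimately show "q \<in> halfline q \<inter> lattice" ..
  show "q \<noteq> 0"
  proof
    assume "q = 0"
    then have "\<And>i. Q i = 0" using q by (metis of_int_eq_0_iff zero_index)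
    then have "range Q = {0}" by auto
    with Q show False by simp
  qed
next
  fix z assume z: "z \<in> halfline q \<inter> lattice"
  then obtain t where t: "0 \<le> t" "z = t *s q" by blast
  have "t * of_int (Q i) \<in> \<int>" for i
    using z unfolding lattice_def t(2) by (simp add: q)
  with Q have "t \<in> \<int>" by (rule Ints_if_mult_Ints_Gcd_one)
  then obtain k where "t = of_int k" by (elim Ints_cases)
  with t have "z = of_nat (nat k) *s q" by simp
  then show "\<exists>k. z = of_nat k *s q" ..
qed

lemma exists_primitive_gen:
  assumes "v \<noteq> 0"
  shows "\<exists>q. primitive_gen (halfline v) q"
proof -
  obtain D W where D: "0 < D" and W: "\<And>i. D * v $ i = of_int (W i)"
    using exists_common_denominator[of "\<lambda>i. v $ i"] by metis
  define g where "g = Gcd (range W)"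
  obtain i where "v $ i \<noteq> 0" using assms by (auto simp: vec_eq_iff)
  then have "W i \<noteq> 0" using W[of i] D by auto
  then have "g \<noteq> 0" unfolding g_def by (auto simp: Gcd_0_iff)
  then have "0 < g" unfolding g_def by (simp add: order_less_le)
  define Q where "Q i = W i div g" for i
  have W_eq: "W = (\<lambda>i. g * Q i)"
    unfolding Q_def g_def by (simp add: fun_eq_iff)
  have "range W = (*) g ` range Q"
    unfolding W_eq by auto
  then have "Gcd (range W) = normalize (g * Gcd (range Q))"
    by (simp only: Gcd_mult)
  then have "Gcd (range Q) = 1"
    using \<open>0 < g\<close> unfolding g_def[symmetric] by (simp add: abs_mult)
  moreover have "((D / of_int g) *s v) $ i = of_int (Q i)" for i
    using W[of i] \<open>0 < g\<close> unfolding W_eq by simp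
  ultimately have "primitive_gen (halfline ((D / of_int g) *s v)) ((D / of_int g) *s v)"
    by (intro primitive_gen_halfline_if_Gcd_one)
  moreover have "halfline ((D / of_int g) *s v) = halfline v"
    using D \<open>0 < g\<close> by (intro halfline_scale) simp
  ultimately show ?thesis by metis
qed

section \<open>The cone over the basis\<close>

definition positive_axes :: "('i \<Rightarrow> rat ^ 'n) \<Rightarrow> (rat ^ 'n) set" where
  "positive_axes p = {c *s p i | c i. 0 < c}"

lemma generator_in_positive_axes_or_neg_octant:
  assumes ray: "halfline s \<in> rays \<Sigma>" and "s \<noteq> 0"
    and prim: "\<forall>i. primitive_gen (R i) (p i)"
    and others: "\<forall>\<rho>\<in>rays \<Sigma>. \<rho> \<notin> range R \<longrightarrow> (\<forall>q. primitive_gen \<rho> q \<longrightarrow> q \<in> neg_octant (range p))"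
  shows "s \<in> positive_axes p \<union> neg_octant (range p)"
proof (cases "halfline s \<in> range R")
  case True
  then obtain i where "halfline s = R i" by auto
  with prim have "p i \<in> halfline s" "p i \<noteq> 0"
    unfolding primitive_gen_def by auto
  then obtain c where "0 < c" "s = c *s p i" by (rule halfline_nonzero_mem)
  then show ?thesis unfolding positive_axes_def by blast
next
  case False
  obtain q where q: "primitive_gen (halfline s) q"
    using exists_primitive_gen[OF \<open>s \<noteq> 0\<close>] by blast
  with others ray False have "- q \<in> cone_gen (range p)"
    by (force simp: neg_octant_eq_uminus_cone_gen)
  moreover from q have "q \<in> halfline s" "q \<noteq> 0"
    unfolding primitive_gen_def by auto
  then obtain c where "0 < c" "s = c *s q" by (rule halfline_nonzero_mem)
  ultimately have "- s \<in> cone_gen (range p)"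
    using cone_gen_scale[of "- q" "range p" c] by simp
  then have "s \<in> neg_octant (range p)"
    unfolding neg_octant_eq_uminus_cone_gen by (force intro: image_eqI[of _ _ "- s"])
  then show ?thesis ..
qed

definition nonpos_coord_cone :: "('i::finite \<Rightarrow> rat ^ 'n) \<Rightarrow> 'i \<Rightarrow> (rat ^ 'n) set" where
  "nonpos_coord_cone p i = {\<Sum>j\<in>UNIV. a j *s p j | a. a i \<le> 0}"

lemma is_convex_cone_nonpos_coord_cone: "is_convex_cone (nonpos_coord_cone p i)"
  unfolding is_convex_cone_def nonpos_coord_cone_def
proof (intro conjI ballI allI impI)
  show "0 \<in> {\<Sum>j\<in>UNIV. a j *s p j | a. a i \<le> 0}"
    by (intro CollectI exI[of _ "\<lambda>_. 0"]) simp
  fix x y assume "x \<in> {\<Sum>j\<in>UNIV. a j *s p j | a. a i \<le> 0}" "y \<in> {\<Sum>j\<in>UNIV. a j *s p j | a. a i \<le> 0}"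
  then obtain a b where "a i \<le> 0" "x = (\<Sum>j\<in>UNIV. a j *s p j)" "b i \<le> 0" "y = (\<Sum>j\<in>UNIV. b j *s p j)"
    by blast
  then show "x + y \<in> {\<Sum>j\<in>UNIV. a j *s p j | a. a i \<le> 0}"
    by (intro CollectI exI[of _ "\<lambda>j. a j + b j"]) (simp add: vector_sadd_rdistrib sum.distrib)
next
  fix c :: rat and x assume "0 \<le> c" "x \<in> {\<Sum>j\<in>UNIV. a j *s p j | a. a i \<le> 0}"
  then obtain a where "a i \<le> 0" "x = (\<Sum>j\<in>UNIV. a j *s p j)" by blast
  with \<open>0 \<le> c\<close> show "c *s x \<in> {\<Sum>j\<in>UNIV. a j *s p j | a. a i \<le> 0}"
    by (intro CollectI exI[of _ "\<lambda>j. c * a j"])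
      (simp add: smult_sum vector_smult_assoc mult_nonneg_nonpos)
qed

lemma sum_basis_notin_nonpos_coord_cone:
  assumes "lattice_basis p"
  shows "(\<Sum>j\<in>UNIV. p j) \<notin> nonpos_coord_cone p i"
proof
  assume "(\<Sum>j\<in>UNIV. p j) \<in> nonpos_coord_cone p i"
  then obtain a where "a i \<le> 0" "(\<Sum>j\<in>UNIV. 1 *s p j) = (\<Sum>j\<in>UNIV. a j *s p j)"
    unfolding nonpos_coord_cone_def by auto
  then have "(\<lambda>_. 1) = a"
    by (intro lattice_basis_coeffs_unique[OF assms]) simp
  with \<open>a i \<le> 0\<close> show False by auto
qed

lemma neg_octant_subset_nonpos_coord_cone:
  assumes "inj p"
  shows "neg_octant (range p) \<subseteq> nonpos_coord_cone p i"
proof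
  fix x assume "x \<in> neg_octant (range p)"
  then obtain a where "\<forall>t\<in>range p. a t \<le> 0" "x = (\<Sum>t\<in>range p. a t *s t)"
    unfolding neg_octant_def by blast
  with assms show "x \<in> nonpos_coord_cone p i"
    unfolding nonpos_coord_cone_def
    by (intro CollectI exI[of _ "\<lambda>j. a (p j)"]) (simp add: sum.reindex)
qed

lemma axis_in_nonpos_coord_cone:
  assumes "j \<noteq> i"
  shows "c *s p j \<in> nonpos_coord_cone p i"
  unfolding nonpos_coord_cone_def
  using assms by (intro CollectI exI[of _ "\<lambda>k. if k = j then c else 0"]) (simp add: sum_delta_smult)

lemma basis_vector_in_cone_gen:
  assumes basis: "lattice_basis p" and fin: "finite S"
    and S: "S \<subseteq> positive_axes p \<union> neg_octant (range p)"
    and sum_mem: "(\<Sum>j\<in>UNIV. p j) \<in> cone_gen S"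
  shows "p i \<in> cone_gen S"
proof -
  have "\<not> S \<subseteq> nonpos_coord_cone p i"
    using cone_gen_least[OF is_convex_cone_nonpos_coord_cone] sum_mem
      sum_basis_notin_nonpos_coord_cone[OF basis] by blast
  then obtain s where "s \<in> S" "s \<notin> nonpos_coord_cone p i" by blast
  moreover have "neg_octant (range p) \<subseteq> nonpos_coord_cone p i"
    using basis by (simp add: lattice_basis_inj neg_octant_subset_nonpos_coord_cone)
  ultimately obtain c j where "0 < c" "s = c *s p j"
    using S unfolding positive_axes_def by blast
  moreover from this \<open>s \<notin> nonpos_coord_cone p i\<close> have "j = i"
    using axis_in_nonpos_coord_cone[of j i c p] by blast
  ultimately have "s = c *s p i" by simp
  then have "p i = (1 / c) *s s"
    using \<open>0 < c\<close> by (simp add: vector_smult_assoc)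
  then show ?thesis
    using fin \<open>s \<in> S\<close> \<open>0 < c\<close> by (simp add: cone_gen_mem cone_gen_scale)
qed

lemma cone_gen_eq_basis_cone:
  assumes basis: "lattice_basis p" and fin: "finite S"
    and S: "S \<subseteq> positive_axes p \<union> neg_octant (range p)" and "0 \<notin> S"
    and sc: "strongly_convex (cone_gen S)" and sum_mem: "(\<Sum>j\<in>UNIV. p j) \<in> cone_gen S"
  shows "cone_gen S = cone_gen (range p)"
proof
  have "range p \<subseteq> cone_gen S"
    using basis_vector_in_cone_gen[OF basis fin S sum_mem] by blast
  then show basis_cone: "cone_gen (range p) \<subseteq> cone_gen S"
    by (intro cone_gen_least is_convex_cone_cone_gen)
  have "s \<in> cone_gen (range p)" if "s \<in> S" for s
  proof (rule UnE[OF subsetD[OF S \<open>s \<in> S\<close>]])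
    assume "s \<in> positive_axes p"
    then obtain c i where "0 < c" "s = c *s p i"
      unfolding positive_axes_def by blast
    moreover have "p i \<in> cone_gen (range p)" by (simp add: cone_gen_mem)
    ultimately show ?thesis by (simp add: cone_gen_scale)
  next
    assume "s \<in> neg_octant (range p)"
    then have "- s \<in> cone_gen S"
      using basis_cone by (auto simp: neg_octant_eq_uminus_cone_gen)
    with sc have "s = 0"
      using fin \<open>s \<in> S\<close> by (intro strongly_convex_neg_mem) (auto intro: cone_gen_mem)
    with \<open>0 \<notin> S\<close> \<open>s \<in> S\<close> show ?thesis by blast
  qed
  then show "cone_gen S \<subseteq> cone_gen (range p)"
    by (intro cone_gen_least is_convex_cone_cone_gen) blast
qed

theorem mainTheorem2:
  fixes \<Sigma> :: "(rat ^ 'n) set set"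
    and R :: "'n \<Rightarrow> (rat ^ 'n) set"
    and p :: "'n \<Rightarrow> rat ^ 'n"
  assumes "complete_fan \<Sigma>"
    and "\<forall>i. R i \<in> rays \<Sigma>"
    and "\<forall>i. primitive_gen (R i) (p i)"
    and "lattice_basis p"
    and "\<forall>\<rho>\<in>rays \<Sigma>. \<rho> \<notin> range R \<longrightarrow>
           (\<forall>q. primitive_gen \<rho> q \<longrightarrow> q \<in> neg_octant (range p))"
  shows "cone_gen (range p) \<in> \<Sigma>"
proof -
  have fan: "is_fan \<Sigma>" and "\<Union>\<Sigma> = UNIV"
    using assms(1) unfolding complete_fan_def by auto
  then have "(\<Sum>j\<in>UNIV. p j) \<in> \<Union>\<Sigma>" by simp
  then obtain \<sigma> where "\<sigma> \<in> \<Sigma>" and sum_mem: "(\<Sum>j\<in>UNIV. p j) \<in> \<sigma>" by blast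
  obtain S where fin: "finite S" and "irredundant S" and "\<sigma> = cone_gen S"
    using fan \<open>\<sigma> \<in> \<Sigma>\<close> by (rule fan_cone_irredundant_generators)
  with \<open>\<sigma> \<in> \<Sigma>\<close> sum_mem have "cone_gen S \<in> \<Sigma>" "(\<Sum>j\<in>UNIV. p j) \<in> cone_gen S" by simp_all
  have "S \<subseteq> positive_axes p \<union> neg_octant (range p)"
  proof
    fix s assume "s \<in> S"
    with fan \<open>cone_gen S \<in> \<Sigma>\<close> fin \<open>irredundant S\<close>
    have "halfline s \<in> rays \<Sigma>" "s \<noteq> 0"
      by (simp_all add: irredundant_halfline_in_rays irredundant_nonzero)
    then show "s \<in> positive_axes p \<union> neg_octant (range p)"
      using assms(3,5) by (rule generator_in_positive_axes_or_neg_octant)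
  qed
  moreover have "0 \<notin> S"
    using \<open>irredundant S\<close> irredundant_nonzero by blast
  moreover have "strongly_convex (cone_gen S)"
    using fan \<open>cone_gen S \<in> \<Sigma>\<close> by (rule is_fan_strongly_convex)
  ultimately have "cone_gen S = cone_gen (range p)"
    using assms(4) fin \<open>(\<Sum>j\<in>UNIV. p j) \<in> cone_gen S\<close> by (intro cone_gen_eq_basis_cone)
  with \<open>cone_gen S \<in> \<Sigma>\<close> show ?thesis by simp
qed

end
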